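(* Let $P>0$ and $0<R<\lim_{\rho\to\infty}I_{\mathcal X}(\rho)$. Consider the problem of minimizing $\Pr\big(\frac1B\sum_b I_{\mathcal X}(p_b(\boldsymbol\gamma)\gamma_b)<R\big)$ over all (possibly randomized, given $\boldsymbol\gamma$) power allocation rules $\mathbf p(\boldsymbol\gamma)\in[0,\infty)^B$ satisfying $\mathbb E\big[\frac1B\sum_b p_b(\boldsymbol\gamma)\big]\le P$. A solution is \[ \mathbf p^{\rm opt}_{\rm lt}(\boldsymbol\gamma)=\begin{cases}\boldsymbol\wp^{\rm opt}(\boldsymbol\gamma)&\text{with probability }\hat w(\boldsymbol\gamma),\\ \mathbf 0&\text{with probability }1-\hat w(\boldsymbol\gamma),\end{cases} \] where $\boldsymbol\wp^{\rm opt}(\boldsymbol\gamma)$ minimizes $\frac1B\sum_b\wp_b$ subject to $\frac1B\sum_b I_{\mathcal X}(\wp_b\gamma_b)\ge R$, $\wp_b\ge0$, and $\hat w$ is a solution of: maximize $\mathbb E[w(\boldsymbol\gamma)]$ over measurable $w$ with $0\le w(\boldsymbol\gamma)\le1$ and $\mathbb E\big[\overline{\boldsymbol\wp^{\rm opt}(\boldsymbol\gamma)}\,w(\boldsymbol\gamma)\big]\le P$.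
   Context: $\overline{\mathbf x}=\frac1B\sum_{b=1}^Bx_b$ denotes the arithmetic mean. $I_{\mathcal X}(\rho)$ is the mutual information (bits) of the AWGN channel with SNR $\rho$ and uniform input on a discrete constellation $\mathcal X$ (coded modulation or BICM). Expectations are with respect to the distribution of the fading vector $\boldsymbol\gamma$ (and the randomization of the scheme). *)

theory Defs
  imports "HOL-Probability.Probability"
begin

text \<open>Complex AWGN channel y = sqrt rho * x + z, z circularly symmetric complex Gaussian
  with unit variance, density exp(-|z|^2)/pi with respect to Lebesgue measure on the complex
  plane. A constellation is a finite set of at least two points with unit average energy,
  so that rho is the SNR; the input is uniform on the constellation.\<close>

definition constellation :: "complex set \<Rightarrow> bool" where
  "constellation X \<longleftrightarrow> finite X \<and> card X \<ge> 2 \<and>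
     (\<Sum>x\<in>X. (cmod x)^2) / real (card X) = 1"

definition gauss_density :: "complex \<Rightarrow> real" where
  "gauss_density z = exp (- ((cmod z)^2)) / pi"

text \<open>Likelihood ratio p(y|x')/p(y|x) evaluated at y = sqrt rho * x + z.\<close>
definition lr :: "real \<Rightarrow> complex \<Rightarrow> complex \<Rightarrow> complex \<Rightarrow> real" where
  "lr \<rho> x x' z = exp ((cmod z)^2 - (cmod (complex_of_real (sqrt \<rho>) * (x - x') + z))^2)"

definition cm_mi :: "complex set \<Rightarrow> real \<Rightarrow> real" where
  "cm_mi X \<rho> = log 2 (real (card X)) - (1 / real (card X)) *
     (\<Sum>x\<in>X. \<integral>z. log 2 (\<Sum>x'\<in>X. lr \<rho> x x' z) * gauss_density z \<partial>lborel)"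

text \<open>BICM mutual information (bits) for a binary labeling lab : X -> {0,1}^m
  (bijective), sum over bit levels of I(C_j ; Y).\<close>
definition labeling :: "complex set \<Rightarrow> nat \<Rightarrow> (complex \<Rightarrow> bool list) \<Rightarrow> bool" where
  "labeling X m lab \<longleftrightarrow> bij_betw lab X {bs. length bs = m}"

definition bicm_mi :: "complex set \<Rightarrow> nat \<Rightarrow> (complex \<Rightarrow> bool list) \<Rightarrow> real \<Rightarrow> real" where
  "bicm_mi X m lab \<rho> = real m - (1 / real (card X)) *
     (\<Sum>j<m. \<Sum>x\<in>X. \<integral>z. log 2 ((\<Sum>x'\<in>X. lr \<rho> x x' z) /
          (\<Sum>x'\<in>{x'\<in>X. lab x' ! j = lab x ! j}. lr \<rho> x x' z)) * gauss_density z \<partial>lborel)"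

definition is_mi_function :: "(real \<Rightarrow> real) \<Rightarrow> bool" where
  "is_mi_function I \<longleftrightarrow> (\<exists>X. constellation X \<and>
     (I = cm_mi X \<or> (\<exists>m lab. labeling X m lab \<and> I = bicm_mi X m lab)))"

text \<open>Arithmetic mean over the B blocks (the block index type 'b has B elements).\<close>
definition avg :: "real ^ 'b::finite \<Rightarrow> real" where
  "avg v = (\<Sum>b\<in>UNIV. v $ b) / real CARD('b)"

definition unif01 :: "real measure" where
  "unif01 = uniform_measure lborel {0..1}"

text \<open>A (possibly randomized) power allocation rule is a jointly measurable map
  p(gamma, u) with u the independent uniform randomization; it is admissible if
  nonnegative and satisfies the average power constraint E[mean p] <= P.\<close>
definition admissible_rule ::
  "(real ^ 'b::finite) measure \<Rightarrow> real \<Rightarrow> (real ^ 'b \<Rightarrow> real \<Rightarrow> real ^ 'b) \<Rightarrow> bool" where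
  "admissible_rule M P p \<longleftrightarrow>
     case_prod p \<in> borel_measurable (M \<Otimes>\<^sub>M unif01) \<and>
     (\<forall>g u b. 0 \<le> p g u $ b) \<and>
     (\<integral>\<^sup>+ \<omega>. ennreal (avg (case_prod p \<omega>)) \<partial>(M \<Otimes>\<^sub>M unif01)) \<le> ennreal P"

definition outage_prob ::
  "(real \<Rightarrow> real) \<Rightarrow> real \<Rightarrow> (real ^ 'b::finite) measure \<Rightarrow> (real ^ 'b \<Rightarrow> real \<Rightarrow> real ^ 'b) \<Rightarrow> real" where
  "outage_prob I R M p = measure (M \<Otimes>\<^sub>M unif01)
     {(g, u) \<in> space (M \<Otimes>\<^sub>M unif01). avg (\<chi> b. I (p g u $ b * g $ b)) < R}"

definition is_min_power_alloc ::
  "(real \<Rightarrow> real) \<Rightarrow> real \<Rightarrow> real ^ 'b::finite \<Rightarrow> real ^ 'b \<Rightarrow> bool" where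
  "is_min_power_alloc I R \<gamma> v \<longleftrightarrow>
     (\<forall>b. 0 \<le> v $ b) \<and> avg (\<chi> b. I (v $ b * \<gamma> $ b)) \<ge> R \<and>
     (\<forall>v'. (\<forall>b. 0 \<le> v' $ b) \<and> avg (\<chi> b. I (v' $ b * \<gamma> $ b)) \<ge> R \<longrightarrow> avg v \<le> avg v')"

definition feasible_weight ::
  "(real ^ 'b::finite) measure \<Rightarrow> real \<Rightarrow> (real ^ 'b \<Rightarrow> real ^ 'b) \<Rightarrow> (real ^ 'b \<Rightarrow> real) \<Rightarrow> bool" where
  "feasible_weight M P wp w \<longleftrightarrow> w \<in> borel_measurable M \<and> (\<forall>g\<in>space M. 0 \<le> w g \<and> w g \<le> 1) \<and>
     (\<integral>\<^sup>+ g. ennreal (avg (wp g) * w g) \<partial>M) \<le> ennreal P"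

end

theory Submission
  imports Defs
begin

text \<open>
  For a rule p call the event "mean_b I(p_b gamma_b) >= R" its success set; the
  outage probability is one minus the measure of the success set. Two facts about weights
  w(gamma) in [0,1] drive the argument:
  (1) The threshold rule "transmit wp(gamma) if u < w(gamma), else nothing" spends expected
      power E[mean(wp) w] and, since wp(gamma) achieves rate R almost surely, succeeds with
      probability at least E[w]. For w = w_hat this rule is admissible.
  (2) For an arbitrary admissible rule p, its conditional success probability
      w_p(gamma) = Pr_u(success | gamma) is a feasible weight: whenever p succeeds it uses at
      least the minimal power mean(wp(gamma)), so E[mean(wp) w_p] <= E[mean p] <= P.
      Its success probability is E[w_p] <= E[w_hat] by optimality of w_hat.
  Combining (1) and (2) shows that the threshold rule with w_hat minimises the outage.
\<close>

lemma lr_measurable[measurable]: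
  "case_prod (\<lambda>\<rho> z. lr \<rho> x x' z) \<in> borel_measurable (borel \<Otimes>\<^sub>M (lborel::complex measure))"
  unfolding lr_def by measurable

lemma cm_mi_measurable: "cm_mi X \<in> borel_measurable borel"
proof -
  interpret sigma_finite_measure "lborel::complex measure" by (rule sigma_finite_lborel)
  show ?thesis unfolding cm_mi_def gauss_density_def lr_def by measurable
qed

lemma bicm_mi_measurable: "bicm_mi X m lab \<in> borel_measurable borel"
proof -
  interpret sigma_finite_measure "lborel::complex measure" by (rule sigma_finite_lborel)
  show ?thesis unfolding bicm_mi_def gauss_density_def lr_def by measurable
qed

lemma mi_function_measurable: "is_mi_function I \<Longrightarrow> I \<in> borel_measurable borel"
  unfolding is_mi_function_def using cm_mi_measurable bicm_mi_measurable by blast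

lemma vec_nth_measurable[measurable (raw)]:
  "f \<in> borel_measurable N \<Longrightarrow> (\<lambda>x. f x $ b :: real) \<in> borel_measurable N"
  for f :: "_ \<Rightarrow> real ^ 'b::finite"
proof -
  have "(\<lambda>x::real ^ 'b. x $ b) \<in> borel_measurable borel" by measurable
  then show "f \<in> borel_measurable N \<Longrightarrow> ?thesis" by (rule measurable_compose[rotated])
qed

lemma avg_measurable[measurable (raw)]:
  "f \<in> borel_measurable N \<Longrightarrow> (\<lambda>x. avg (f x :: real ^ 'b::finite)) \<in> borel_measurable N"
  unfolding avg_def by (intro borel_measurable_divide borel_measurable_sum) simp_all

lemma avg_nonneg: "(\<And>b. 0 \<le> v $ b) \<Longrightarrow> 0 \<le> avg (v :: real ^ 'b::finite)"
  by (simp add: avg_def sum_nonneg)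

lemma prob_space_unif01: "prob_space unif01"
  unfolding unif01_def by (rule prob_space_uniform_measure) auto

lemma space_unif01[simp]: "space unif01 = UNIV"
  and sets_unif01: "sets unif01 = sets borel"
  by (simp_all add: unif01_def)

text \<open>The event u < c has probability c; this is what turns a threshold into a weight.\<close>
lemma emeasure_unif01_lessThan:
  assumes "0 \<le> c" "c \<le> 1" shows "emeasure unif01 {..<c} = ennreal c"
proof -
  have "{0..1::real} \<inter> {..<c} = {0..<c}" using assms by auto
  then show ?thesis unfolding unif01_def using assms by (simp add: divide_ennreal_def)
qed

lemma snd_measurable_unif01[measurable]:
  "(\<lambda>x. snd x :: real) \<in> borel_measurable (M \<Otimes>\<^sub>M unif01)"
  by (subst measurable_cong_sets[OF refl sets_unif01, symmetric]) (rule measurable_snd)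

lemma nn_integral_unif01_fst:
  "f \<in> borel_measurable (M \<Otimes>\<^sub>M unif01) \<Longrightarrow>
     (\<integral>\<^sup>+ g. \<integral>\<^sup>+ u. f (g, u) \<partial>unif01 \<partial>M) = (\<integral>\<^sup>+ \<omega>. f \<omega> \<partial>(M \<Otimes>\<^sub>M unif01))"
proof -
  interpret U: prob_space unif01 by (rule prob_space_unif01)
  show "f \<in> borel_measurable (M \<Otimes>\<^sub>M unif01) \<Longrightarrow> ?thesis" by (rule U.nn_integral_fst)
qed

definition success_set ::
  "(real \<Rightarrow> real) \<Rightarrow> real \<Rightarrow> (real ^ 'b::finite) measure \<Rightarrow> (real ^ 'b \<Rightarrow> real \<Rightarrow> real ^ 'b)
     \<Rightarrow> ((real ^ 'b) \<times> real) set" where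
  "success_set I R M p = {(g, u) \<in> space (M \<Otimes>\<^sub>M unif01). R \<le> avg (\<chi> b. I (p g u $ b * g $ b))}"

lemma success_set_sets:
  fixes M :: "(real ^ 'b::finite) measure"
  assumes [measurable]: "I \<in> borel_measurable borel" "case_prod p \<in> borel_measurable (M \<Otimes>\<^sub>M unif01)"
    and M_sets: "sets M = sets borel"
  shows "success_set I R M p \<in> sets (M \<Otimes>\<^sub>M unif01)"
proof -
  have [measurable]: "(\<lambda>g. g $ b :: real) \<in> borel_measurable M" for b
    by (simp add: measurable_cong_sets[OF M_sets refl])
  have "success_set I R M p = {x \<in> space (M \<Otimes>\<^sub>M unif01).
      R \<le> (\<Sum>b\<in>UNIV. I (case_prod p x $ b * fst x $ b)) / real CARD('b)}"
    unfolding success_set_def avg_def by auto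
  also have "\<dots> \<in> sets (M \<Otimes>\<^sub>M unif01)" by measurable
  finally show ?thesis .
qed

lemma outage_prob_success_set:
  assumes "prob_space M" "I \<in> borel_measurable borel"
    "case_prod p \<in> borel_measurable (M \<Otimes>\<^sub>M unif01)" "sets M = sets borel"
  shows "outage_prob I R M p = 1 - measure (M \<Otimes>\<^sub>M unif01) (success_set I R M p)"
proof -
  interpret pair_prob_space M unif01
    using assms(1) prob_space_unif01 by (simp add: pair_prob_space_def pair_sigma_finite_def
        prob_space_imp_sigma_finite)
  have "{(g, u) \<in> space (M \<Otimes>\<^sub>M unif01). avg (\<chi> b. I (p g u $ b * g $ b)) < R}
          = space (M \<Otimes>\<^sub>M unif01) - success_set I R M p"
    unfolding success_set_def by auto
  then show ?thesis
    unfolding outage_prob_def using prob_compl[OF success_set_sets[OF assms(2-4)]] by simp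
qed

lemma outage_prob_mono:
  assumes "prob_space M" "I \<in> borel_measurable borel" "sets M = sets borel"
    "case_prod p \<in> borel_measurable (M \<Otimes>\<^sub>M unif01)" "case_prod q \<in> borel_measurable (M \<Otimes>\<^sub>M unif01)"
    "emeasure (M \<Otimes>\<^sub>M unif01) (success_set I R M p) \<le> emeasure (M \<Otimes>\<^sub>M unif01) (success_set I R M q)"
  shows "outage_prob I R M q \<le> outage_prob I R M p"
proof -
  interpret pair_prob_space M unif01
    using assms(1) prob_space_unif01 by (simp add: pair_prob_space_def pair_sigma_finite_def
        prob_space_imp_sigma_finite)
  have "measure (M \<Otimes>\<^sub>M unif01) (success_set I R M p) \<le> measure (M \<Otimes>\<^sub>M unif01) (success_set I R M q)"
    using assms(6) by (simp add: emeasure_eq_measure)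
  then show ?thesis using assms by (simp add: outage_prob_success_set)
qed

definition threshold_rule ::
  "(real ^ 'b::finite \<Rightarrow> real ^ 'b) \<Rightarrow> (real ^ 'b \<Rightarrow> real) \<Rightarrow> real ^ 'b \<Rightarrow> real \<Rightarrow> real ^ 'b" where
  "threshold_rule wp w g u = (if u < w g then wp g else 0)"

lemma threshold_rule_measurable[measurable]:
  assumes [measurable]: "wp \<in> borel_measurable M" "w \<in> borel_measurable M"
  shows "case_prod (threshold_rule wp w) \<in> borel_measurable (M \<Otimes>\<^sub>M unif01)"
proof -
  have "case_prod (threshold_rule wp w) = (\<lambda>x. if snd x < w (fst x) then wp (fst x) else 0)"
    by (auto simp: threshold_rule_def)
  also have "\<dots> \<in> borel_measurable (M \<Otimes>\<^sub>M unif01)" by measurable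
  finally show ?thesis .
qed

lemma threshold_rule_power:
  assumes [measurable]: "wp \<in> borel_measurable M" "w \<in> borel_measurable M"
    and wp_nonneg: "\<forall>g b. 0 \<le> wp g $ b" and w01: "\<And>g. g \<in> space M \<Longrightarrow> 0 \<le> w g \<and> w g \<le> 1"
  shows "(\<integral>\<^sup>+ \<omega>. ennreal (avg (case_prod (threshold_rule wp w) \<omega>)) \<partial>(M \<Otimes>\<^sub>M unif01))
           = (\<integral>\<^sup>+ g. ennreal (avg (wp g) * w g) \<partial>M)"
proof -
  have "(\<integral>\<^sup>+ u. ennreal (avg (threshold_rule wp w g u)) \<partial>unif01) = ennreal (avg (wp g) * w g)"
    if g: "g \<in> space M" for g
  proof -
    have "(\<integral>\<^sup>+ u. ennreal (avg (threshold_rule wp w g u)) \<partial>unif01)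
            = (\<integral>\<^sup>+ u. ennreal (avg (wp g)) * indicator {..<w g} u \<partial>unif01)"
      by (rule nn_integral_cong) (auto simp: threshold_rule_def indicator_def avg_def)
    also have "\<dots> = ennreal (avg (wp g)) * emeasure unif01 {..<w g}"
      by (rule nn_integral_cmult_indicator) (simp add: unif01_def)
    also have "\<dots> = ennreal (avg (wp g) * w g)"
      using w01[OF g] avg_nonneg[of "wp g"] wp_nonneg
      by (simp add: emeasure_unif01_lessThan ennreal_mult)
    finally show ?thesis .
  qed
  then show ?thesis
    by (simp add: nn_integral_unif01_fst[symmetric] cong: nn_integral_cong)
qed

lemma threshold_rule_admissible:
  assumes "feasible_weight M P wp w" "wp \<in> borel_measurable M" "\<forall>g b. 0 \<le> wp g $ b"
  shows "admissible_rule M P (threshold_rule wp w)"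
proof -
  have w_meas: "w \<in> borel_measurable M" and w01: "\<And>g. g \<in> space M \<Longrightarrow> 0 \<le> w g \<and> w g \<le> 1"
    and w_power: "(\<integral>\<^sup>+ g. ennreal (avg (wp g) * w g) \<partial>M) \<le> ennreal P"
    using assms(1) unfolding feasible_weight_def by auto
  show ?thesis
    unfolding admissible_rule_def
    using threshold_rule_measurable[OF assms(2) w_meas] threshold_rule_power[OF assms(2) w_meas assms(3) w01]
      w_power assms(3) by (simp add: threshold_rule_def)
qed

lemma threshold_rule_success:
  assumes [measurable]: "I \<in> borel_measurable borel" "wp \<in> borel_measurable M" "w \<in> borel_measurable M"
    and M_sets: "sets M = sets borel"
    and w01: "\<And>g. g \<in> space M \<Longrightarrow> 0 \<le> w g \<and> w g \<le> 1"
    and wp_rate: "AE g in M. R \<le> avg (\<chi> b. I (wp g $ b * g $ b))"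
  shows "(\<integral>\<^sup>+ g. ennreal (w g) \<partial>M) \<le> emeasure (M \<Otimes>\<^sub>M unif01) (success_set I R M (threshold_rule wp w))"
proof -
  let ?S = "success_set I R M (threshold_rule wp w)"
  have "(\<integral>\<^sup>+ g. ennreal (w g) \<partial>M) = (\<integral>\<^sup>+ g. emeasure unif01 {..<w g} \<partial>M)"
    using w01 by (intro nn_integral_cong) (simp add: emeasure_unif01_lessThan)
  also have "\<dots> = (\<integral>\<^sup>+ g. \<integral>\<^sup>+ u. indicator {..<w g} u \<partial>unif01 \<partial>M)"
    by (intro nn_integral_cong) (simp add: sets_unif01)
  also have "\<dots> \<le> (\<integral>\<^sup>+ g. \<integral>\<^sup>+ u. indicator ?S (g, u) \<partial>unif01 \<partial>M)"
  proof (rule nn_integral_mono_AE)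
    show "AE g in M. (\<integral>\<^sup>+ u. indicator {..<w g} u \<partial>unif01) \<le> (\<integral>\<^sup>+ u. indicator ?S (g, u) \<partial>unif01)"
      using wp_rate AE_space
    proof eventually_elim
      case (elim g)
      then have "u < w g \<Longrightarrow> (g, u) \<in> ?S" for u
        by (auto simp: success_set_def threshold_rule_def space_pair_measure)
      then show ?case by (intro nn_integral_mono) (auto simp: indicator_def)
    qed
  qed
  also have "\<dots> = emeasure (M \<Otimes>\<^sub>M unif01) ?S"
    using success_set_sets[OF assms(1) threshold_rule_measurable[OF assms(2,3)] M_sets]
    by (simp add: nn_integral_unif01_fst)
  finally show ?thesis .
qed

definition cond_success ::
  "(real \<Rightarrow> real) \<Rightarrow> real \<Rightarrow> (real ^ 'b::finite) measure \<Rightarrow> (real ^ 'b \<Rightarrow> real \<Rightarrow> real ^ 'b)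
     \<Rightarrow> real ^ 'b \<Rightarrow> real" where
  "cond_success I R M p g = enn2real (\<integral>\<^sup>+ u. indicator (success_set I R M p) (g, u) \<partial>unif01)"

lemma cond_success_nonneg: "0 \<le> cond_success I R M p g"
  by (simp add: cond_success_def)

lemma cond_success_ennreal:
  "ennreal (cond_success I R M p g) = (\<integral>\<^sup>+ u. indicator (success_set I R M p) (g, u) \<partial>unif01)"
    and cond_success_le_1: "cond_success I R M p g \<le> 1"
proof -
  interpret U: prob_space unif01 by (rule prob_space_unif01)
  have "(\<integral>\<^sup>+ u. indicator (success_set I R M p) (g, u) \<partial>unif01) \<le> (\<integral>\<^sup>+ u. 1 \<partial>unif01)"
    by (intro nn_integral_mono) (simp add: indicator_def)
  then have le1: "(\<integral>\<^sup>+ u. indicator (success_set I R M p) (g, u) \<partial>unif01) \<le> 1"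
    using U.emeasure_space_1 by simp
  then show "ennreal (cond_success I R M p g) = (\<integral>\<^sup>+ u. indicator (success_set I R M p) (g, u) \<partial>unif01)"
    unfolding cond_success_def by (intro ennreal_enn2real) (metis ennreal_1 ennreal_less_top le_less_trans)
  show "cond_success I R M p g \<le> 1"
    unfolding cond_success_def using le1 by (intro enn2real_leI) auto
qed

lemma success_prob_cond_success:
  assumes "I \<in> borel_measurable borel" "case_prod p \<in> borel_measurable (M \<Otimes>\<^sub>M unif01)"
    "sets M = sets borel"
  shows "emeasure (M \<Otimes>\<^sub>M unif01) (success_set I R M p) = (\<integral>\<^sup>+ g. ennreal (cond_success I R M p g) \<partial>M)"
  using success_set_sets[OF assms] by (simp add: cond_success_ennreal nn_integral_unif01_fst)

text \<open>Fact (2): whenever an admissible rule succeeds it spends at least the minimal power,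
  so its conditional success probability is a feasible weight.\<close>
lemma cond_success_feasible:
  assumes I_meas[measurable]: "I \<in> borel_measurable borel" and M_sets: "sets M = sets borel"
    and wp_opt: "AE g in M. is_min_power_alloc I R g (wp g)"
    and p_adm: "admissible_rule M P p"
  shows "feasible_weight M P wp (cond_success I R M p)"
proof -
  have p_meas[measurable]: "case_prod p \<in> borel_measurable (M \<Otimes>\<^sub>M unif01)"
    and p_nonneg: "\<And>g u b. 0 \<le> p g u $ b"
    and p_power: "(\<integral>\<^sup>+ \<omega>. ennreal (avg (case_prod p \<omega>)) \<partial>(M \<Otimes>\<^sub>M unif01)) \<le> ennreal P"
    using p_adm unfolding admissible_rule_def by auto
  let ?S = "success_set I R M p"
  have S_sets[measurable]: "?S \<in> sets (M \<Otimes>\<^sub>M unif01)"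
    by (rule success_set_sets[OF I_meas p_meas M_sets])
  have "cond_success I R M p \<in> borel_measurable M"
  proof -
    interpret U: prob_space unif01 by (rule prob_space_unif01)
    show ?thesis unfolding cond_success_def by measurable
  qed
  moreover have "(\<integral>\<^sup>+ g. ennreal (avg (wp g) * cond_success I R M p g) \<partial>M) \<le> ennreal P"
  proof -
    have "(\<integral>\<^sup>+ g. ennreal (avg (wp g) * cond_success I R M p g) \<partial>M)
            \<le> (\<integral>\<^sup>+ g. \<integral>\<^sup>+ u. ennreal (avg (p g u)) \<partial>unif01 \<partial>M)"
    proof (rule nn_integral_mono_AE)
      show "AE g in M. ennreal (avg (wp g) * cond_success I R M p g) \<le> (\<integral>\<^sup>+ u. ennreal (avg (p g u)) \<partial>unif01)"
        using wp_opt AE_space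
      proof eventually_elim
        case (elim g)
        have min_power: "(g, u) \<in> ?S \<Longrightarrow> avg (wp g) \<le> avg (p g u)" for u
          using elim(1) p_nonneg unfolding is_min_power_alloc_def success_set_def by blast
        have "ennreal (avg (wp g) * cond_success I R M p g)
                = ennreal (avg (wp g)) * (\<integral>\<^sup>+ u. indicator ?S (g, u) \<partial>unif01)"
        proof -
          have "0 \<le> avg (wp g)"
            using elim(1) by (intro avg_nonneg) (simp add: is_min_power_alloc_def)
          then show ?thesis by (simp only: ennreal_mult cond_success_nonneg cond_success_ennreal)
        qed
        also have "\<dots> = (\<integral>\<^sup>+ u. ennreal (avg (wp g)) * indicator ?S (g, u) \<partial>unif01)"
          by (rule nn_integral_cmult[symmetric])
            (rule measurable_Pair2[OF borel_measurable_indicator[OF S_sets] elim(2)])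
        also have "\<dots> \<le> (\<integral>\<^sup>+ u. ennreal (avg (p g u)) \<partial>unif01)"
          using min_power by (intro nn_integral_mono) (auto simp: indicator_def ennreal_leI)
        finally show ?case .
      qed
    qed
    also have "\<dots> = (\<integral>\<^sup>+ \<omega>. ennreal (avg (case_prod p \<omega>)) \<partial>(M \<Otimes>\<^sub>M unif01))"
      using nn_integral_unif01_fst[of "\<lambda>\<omega>. ennreal (avg (case_prod p \<omega>))"] by simp
    also have "\<dots> \<le> ennreal P" by (rule p_power)
    finally show ?thesis .
  qed
  ultimately show ?thesis
    unfolding feasible_weight_def by (simp add: cond_success_le_1 cond_success_nonneg)
qed

theorem mainTheorem8:
  fixes I :: "real \<Rightarrow> real"
    and M :: "(real ^ 'b::finite) measure"
    and P R Imax :: real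
    and wp :: "real ^ 'b \<Rightarrow> real ^ 'b"
    and w_hat :: "real ^ 'b \<Rightarrow> real"
  assumes I_mi: "is_mi_function I"
    and I_lim: "(I \<longlongrightarrow> Imax) at_top"
    and P_pos: "P > 0"
    and R_pos: "0 < R" and R_lt: "R < Imax"
    and M_prob: "prob_space M"
    and M_sets: "sets M = sets borel"
    and fading_nonneg: "AE g in M. \<forall>b. 0 \<le> g $ b"
    and wp_meas: "wp \<in> borel_measurable M"
    and wp_nonneg: "\<forall>g b. 0 \<le> wp g $ b"
    and wp_opt: "AE g in M. is_min_power_alloc I R g (wp g)"
    and w_hat_feas: "feasible_weight M P wp w_hat"
    and w_hat_opt: "\<forall>w. feasible_weight M P wp w \<longrightarrow>
                      (\<integral>\<^sup>+ g. ennreal (w g) \<partial>M) \<le> (\<integral>\<^sup>+ g. ennreal (w_hat g) \<partial>M)"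
  shows "admissible_rule M P (\<lambda>g u. if u < w_hat g then wp g else 0) \<and>
         (\<forall>p. admissible_rule M P p \<longrightarrow>
            outage_prob I R M (\<lambda>g u. if u < w_hat g then wp g else 0) \<le> outage_prob I R M p)"
proof -
  have I_meas: "I \<in> borel_measurable borel" by (rule mi_function_measurable[OF I_mi])
  have rule_is_threshold: "(\<lambda>g u. if u < w_hat g then wp g else 0) = threshold_rule wp w_hat"
    by (simp add: fun_eq_iff threshold_rule_def)
  have w_hat_meas: "w_hat \<in> borel_measurable M" and w_hat_01: "\<And>g. g \<in> space M \<Longrightarrow> 0 \<le> w_hat g \<and> w_hat g \<le> 1"
    using w_hat_feas unfolding feasible_weight_def by auto
  have wp_rate: "AE g in M. R \<le> avg (\<chi> b. I (wp g $ b * g $ b))"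
    using wp_opt by eventually_elim (simp add: is_min_power_alloc_def)
  have "outage_prob I R M (threshold_rule wp w_hat) \<le> outage_prob I R M p"
    if p_adm: "admissible_rule M P p" for p
  proof (rule outage_prob_mono[OF M_prob I_meas M_sets])
    show p_meas: "case_prod p \<in> borel_measurable (M \<Otimes>\<^sub>M unif01)"
      using p_adm by (simp add: admissible_rule_def)
    show "case_prod (threshold_rule wp w_hat) \<in> borel_measurable (M \<Otimes>\<^sub>M unif01)"
      by (rule threshold_rule_measurable[OF wp_meas w_hat_meas])
    have "emeasure (M \<Otimes>\<^sub>M unif01) (success_set I R M p) = (\<integral>\<^sup>+ g. ennreal (cond_success I R M p g) \<partial>M)"
      by (rule success_prob_cond_success[OF I_meas p_meas M_sets])
    also have "\<dots> \<le> (\<integral>\<^sup>+ g. ennreal (w_hat g) \<partial>M)"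
      using w_hat_opt cond_success_feasible[OF I_meas M_sets wp_opt p_adm] by blast
    also have "\<dots> \<le> emeasure (M \<Otimes>\<^sub>M unif01) (success_set I R M (threshold_rule wp w_hat))"
      by (rule threshold_rule_success[OF I_meas wp_meas w_hat_meas M_sets w_hat_01 wp_rate])
    finally show "emeasure (M \<Otimes>\<^sub>M unif01) (success_set I R M p)
        \<le> emeasure (M \<Otimes>\<^sub>M unif01) (success_set I R M (threshold_rule wp w_hat))" .
  qed
  then show ?thesis
    unfolding rule_is_threshold using threshold_rule_admissible[OF w_hat_feas wp_meas wp_nonneg] by blast
qed

end
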